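(* Let $\alpha=\{a_k\}_{k\ge1}$ be a sequence of positive integers with $a_k\to\infty$, let $j\ge2$, and suppose that for some $\rho>0$, $$L(x;\alpha;j)=\sum_{n=1}^\infty A_L(n)x^n=O\big((1-x)^{-\rho}\big)\qquad\text{as }x\to1^-.$$ Then there is $N_0$ with $\int_0^1 L(x;\alpha;j)F_{N_0}(x;\alpha)|\ln x|^{j-1}\frac{dx}{x}<\infty$, and consequently $\lim_{N\to\infty}E[U_j^N]=I(\alpha;j)<\infty$.
   Context: For $N\ge2$, coupon type $k\in\{1,\dots,N\}$ has probability $a_k/\sum_{i=1}^Na_i$; $U_j^N$ is the number of empty album places of the $j$-th collector when the first collector completes her set (each collector passes duplicates to the next one), with $$E[U_j^N]=\sum_{k=1}^N\int_0^\infty a_k e^{-a_k t}\frac{(a_kt)^{j-1}}{(j-1)!}\prod_{i\ne k,\,1\le i\le N}\big(1-e^{-a_i t}\big)\,dt.$$ $L(x;\alpha;j):=\sum_{k=1}^\infty a_k^j\frac{x^{a_k}}{1-x^{a_k}}$; with $A(m):=\#\{k:a_k=m\}$ this equals $\sum_{m\ge1}m^jA(m)\frac{x^m}{1-x^m}=\sum_{n\ge1}A_L(n)x^n$, $A_L(n):=\sum_{d\mid n}d^jA(d)$. $F_N(x;\alpha):=\prod_{k=1}^N(1-x^{a_k})$, $F(x;\alpha):=\prod_{k=1}^\infty(1-x^{a_k})$, $x_\alpha:=\inf\{x\in[0,1]:\sum_k x^{a_k}=\infty\}$, and $I(\alpha;j):=\frac{1}{(j-1)!}\int_0^{x_\alpha}L(x;\alpha;j)F(x;\alpha)|\ln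 x|^{j-1}\frac{dx}{x}$. *)

theory Defs
  imports "HOL-Analysis.Analysis" "HOL-Library.Landau_Symbols"
begin

text \<open>The sequence alpha is a function a :: nat => nat of which only the values
  a 1, a 2, ... are used (a 0 is irrelevant).\<close>

definition Lser :: "(nat \<Rightarrow> nat) \<Rightarrow> nat \<Rightarrow> real \<Rightarrow> real" where
  "Lser a j x = (\<Sum>k. real (a (Suc k)) ^ j * x ^ a (Suc k) / (1 - x ^ a (Suc k)))"

definition FN :: "(nat \<Rightarrow> nat) \<Rightarrow> nat \<Rightarrow> real \<Rightarrow> real" where
  "FN a N x = (\<Prod>k\<in>{1..N}. 1 - x ^ a k)"

definition Finf :: "(nat \<Rightarrow> nat) \<Rightarrow> real \<Rightarrow> real" where
  "Finf a x = (\<Prod>k. 1 - x ^ a (Suc k))"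

definition x_alpha :: "(nat \<Rightarrow> nat) \<Rightarrow> real" where
  "x_alpha a = Inf {x \<in> {0..1}. \<not> summable (\<lambda>k. x ^ a (Suc k))}"

definition I_alpha :: "(nat \<Rightarrow> nat) \<Rightarrow> nat \<Rightarrow> real" where
  "I_alpha a j = 1 / fact (j - 1) *
     set_lebesgue_integral lborel {0<..<x_alpha a}
       (\<lambda>x. Lser a j x * Finf a x * \<bar>ln x\<bar> ^ (j - 1) / x)"

text \<open>Expected number of empty places of the j-th collector, given by the stated formula.\<close>
definition EU :: "(nat \<Rightarrow> nat) \<Rightarrow> nat \<Rightarrow> nat \<Rightarrow> real" where
  "EU a j N = (\<Sum>k\<in>{1..N}. set_lebesgue_integral lborel {0<..}
      (\<lambda>t. real (a k) * exp (- real (a k) * t) * (real (a k) * t) ^ (j - 1) / fact (j - 1)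
           * (\<Prod>i\<in>{1..N} - {k}. 1 - exp (- real (a i) * t))))"

end

theory Submission
  imports Defs
begin

text \<open>Convergence of the series near 1 propagates to (0, 1) by monotonicity, so L is finite there
  and x_alpha = 1. For N0 >= rho the product L(x) F_N0(x) is O(x) on (0, 1): near 1 the zero
  F_N0(x) = O((1 - x)^N0) absorbs the pole (1 - x)^-rho, near 0 because L(x)/x is nondecreasing.
  Since |ln x|^m is integrable on (0, 1), so is L F_N0 |ln x|^(j-1) / x. The substitution x = e^-t
  turns E[U_j^N] into the integral over (0, 1) of L_N F_N |ln x|^(j-1) / x divided by (j-1)!, with
  L_N the N-th partial sum of L; as L_N F_N <= L F_N0 for N >= N0, dominated convergence gives
  the limit I(alpha; j).\<close>

lemma power_frac_le_scaled:
  fixes x y :: real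
  assumes "0 < x" "x \<le> y" "y < 1" "n \<ge> 1"
  shows "x ^ n / (1 - x ^ n) \<le> x / y * (y ^ n / (1 - y ^ n))"
proof -
  have y: "0 < y" using assms by simp
  have "(x / y) ^ n \<le> (x / y) ^ 1"
    using assms y by (intro power_decreasing) auto
  hence "x ^ n \<le> x / y * y ^ n"
    using y by (simp add: power_divide divide_le_eq)
  moreover have "y ^ n < 1" using assms by (subst power_less_one_iff) auto
  moreover have "x ^ n \<le> y ^ n" using assms by (intro power_mono) auto
  ultimately have "x ^ n / (1 - x ^ n) \<le> x / y * y ^ n / (1 - y ^ n)"
    using assms y by (intro frac_le) auto
  thus ?thesis by simp
qed

lemma one_minus_power_le:
  fixes x :: real
  assumes "0 \<le> x" "x \<le> 1"
  shows "1 - x ^ n \<le> real n * (1 - x)"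
proof -
  have "(\<Sum>i<n. x ^ i) \<le> (\<Sum>i<n. 1)"
    using assms by (intro sum_mono) (auto intro: power_le_one)
  hence "(1 - x) * (\<Sum>i<n. x ^ i) \<le> (1 - x) * real n"
    using assms by (intro mult_left_mono) auto
  thus ?thesis by (simp add: one_diff_power_eq mult.commute)
qed

lemma abs_ln_power_le_powr:
  fixes x :: real
  assumes "0 < x" "x < 1"
  shows "\<bar>ln x\<bar> ^ m \<le> (2 * real m) ^ m * x powr (-1/2)"
proof (cases "m = 0")
  case True
  have "x powr (1/2) < 1" using assms by (simp add: powr01_less_one)
  thus ?thesis using True assms by (simp add: powr_minus one_le_inverse_iff)
next
  case False
  define e where "e = 1 / (2 * real m)"
  have e: "e > 0" using False by (simp add: e_def)
  have "-e * ln x \<le> x powr (-e)"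
    using ln_le_minus_one[of "x powr (-e)"] assms by simp
  hence "\<bar>ln x\<bar> \<le> x powr (-e) / e"
    using assms e by (simp add: abs_if ln_less_zero field_simps split: if_splits)
  hence "\<bar>ln x\<bar> ^ m \<le> (x powr (-e) / e) ^ m"
    by (intro power_mono) auto
  also have "\<dots> = (2 * real m) ^ m * x powr (-e * real m)"
    using assms by (simp add: e_def power_divide power_mult_distrib powr_realpow [symmetric] powr_powr)
  also have "-e * real m = -1/2" using False by (simp add: e_def)
  finally show ?thesis .
qed

lemma set_integrable_lborel_iff_absolutely_integrable:
  fixes f :: "real \<Rightarrow> real"
  assumes "set_borel_measurable lborel S f"
  shows "set_integrable lborel S f \<longleftrightarrow> f absolutely_integrable_on S"
  using assms unfolding set_integrable_def set_borel_measurable_def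
  by (simp add: integrable_completion)

lemma set_integrable_powr_neg_half: "set_integrable lborel {0<..<1::real} (\<lambda>x. x powr (-1/2))"
proof -
  have "(\<lambda>x::real. x powr (-1/2)) absolutely_integrable_on {0<..1}"
    by (intro nonnegative_absolutely_integrable_1 integrable_on_powr_from_0') auto
  hence "set_integrable lborel {0<..1::real} (\<lambda>x. x powr (-1/2))"
    by (subst set_integrable_lborel_iff_absolutely_integrable) (auto simp: set_borel_measurable_def)
  thus ?thesis by (rule set_integrable_subset) auto
qed

lemma set_integrable_abs_ln_power: "set_integrable lborel {0<..<1::real} (\<lambda>x. \<bar>ln x\<bar> ^ m)"
proof (rule set_integrable_bound)
  show "set_integrable lborel {0<..<1::real} (\<lambda>x. (2 * real m) ^ m * x powr (-1/2))"
    using set_integrable_powr_neg_half by (rule set_integrable_mult_right)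
  show "set_borel_measurable lborel {0<..<1::real} (\<lambda>x. \<bar>ln x\<bar> ^ m)"
    unfolding set_borel_measurable_def by measurable
  show "AE x in lborel. x \<in> {0<..<1} \<longrightarrow> norm (\<bar>ln x\<bar> ^ m) \<le> norm ((2 * real m) ^ m * x powr (-1/2))"
  proof (intro AE_I2 impI)
    fix x :: real assume "x \<in> {0<..<1}"
    hence "\<bar>ln x\<bar> ^ m \<le> (2 * real m) ^ m * x powr (-1/2)"
      by (intro abs_ln_power_le_powr) auto
    thus "norm (\<bar>ln x\<bar> ^ m) \<le> norm ((2 * real m) ^ m * x powr (-1/2))"
      by simp
  qed
qed

lemma set_integral_exp_neg_substitution:
  fixes \<phi> :: "real \<Rightarrow> real"
  assumes int: "set_integrable lborel {0<..<1} \<phi>" and [measurable]: "\<phi> \<in> borel_measurable borel"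
  shows "set_integrable lborel {0<..} (\<lambda>t. exp (-t) * \<phi> (exp (-t)))"
    and "(LINT t:{0<..}|lborel. exp (-t) * \<phi> (exp (-t))) = (LINT x:{0<..<1}|lborel. \<phi> x)"
proof -
  have abs_int: "\<phi> absolutely_integrable_on {0<..<1}"
    using int by (subst (asm) set_integrable_lborel_iff_absolutely_integrable)
      (auto simp: set_borel_measurable_def)
  have image: "(\<lambda>t::real. exp (-t)) ` {0<..} = {0<..<1}"
  proof safe
    fix x :: real assume "x \<in> {0<..<1}"
    hence "x = exp (- (- ln x))" "- ln x \<in> {0<..}" by (auto simp: ln_less_zero)
    thus "x \<in> (\<lambda>t. exp (-t)) ` {0<..}" by blast
  qed auto
  have "(\<lambda>t. \<bar>- exp (-t)\<bar> * \<phi> (exp (-t))) absolutely_integrable_on {0<..} \<and>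
        integral {0<..} (\<lambda>t. \<bar>- exp (-t)\<bar> * \<phi> (exp (-t))) = integral {0<..<1} \<phi>"
    using abs_int unfolding image [symmetric]
    by (subst has_absolute_integral_change_of_variables_1')
       (auto intro!: derivative_eq_intros inj_onI)
  hence subst_int: "(\<lambda>t. exp (-t) * \<phi> (exp (-t))) absolutely_integrable_on {0<..}"
    and subst_eq: "integral {0<..} (\<lambda>t. exp (-t) * \<phi> (exp (-t))) = integral {0<..<1} \<phi>"
    by simp_all
  show si: "set_integrable lborel {0<..} (\<lambda>t. exp (-t) * \<phi> (exp (-t)))"
    using subst_int by (subst set_integrable_lborel_iff_absolutely_integrable)
      (auto simp: set_borel_measurable_def)
  show "(LINT t:{0<..}|lborel. exp (-t) * \<phi> (exp (-t))) = (LINT x:{0<..<1}|lborel. \<phi> x)"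
    using subst_eq by (simp add: set_borel_integral_eq_integral(2)[OF si] set_borel_integral_eq_integral(2)[OF int])
qed

definition Lterm :: "(nat \<Rightarrow> nat) \<Rightarrow> nat \<Rightarrow> nat \<Rightarrow> real \<Rightarrow> real" where
  "Lterm a j k x = real (a (Suc k)) ^ j * x ^ a (Suc k) / (1 - x ^ a (Suc k))"

definition Lpart :: "(nat \<Rightarrow> nat) \<Rightarrow> nat \<Rightarrow> nat \<Rightarrow> real \<Rightarrow> real" where
  "Lpart a j N x = (\<Sum>k<N. Lterm a j k x)"

lemma Lser_eq_suminf_Lterm: "Lser a j x = (\<Sum>k. Lterm a j k x)"
  by (simp add: Lser_def Lterm_def)

lemma Lterm_nonneg:
  assumes "0 \<le> x" "x \<le> 1"
  shows "0 \<le> Lterm a j k x"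
  using assms unfolding Lterm_def by (intro divide_nonneg_nonneg) (auto intro: power_le_one)

lemma Lterm_le_scaled:
  assumes pos: "\<forall>k\<ge>1. a k > 0" and "0 < x" "x \<le> y" "y < 1"
  shows "Lterm a j k x \<le> x / y * Lterm a j k y"
proof -
  have "a (Suc k) \<ge> 1" using pos by (simp add: Suc_le_eq)
  hence "real (a (Suc k)) ^ j * (x ^ a (Suc k) / (1 - x ^ a (Suc k)))
     \<le> real (a (Suc k)) ^ j * (x / y * (y ^ a (Suc k) / (1 - y ^ a (Suc k))))"
    using assms by (intro mult_left_mono power_frac_le_scaled) auto
  thus ?thesis unfolding Lterm_def by (simp add: field_simps)
qed

lemma Lterm_mono:
  assumes "\<forall>k\<ge>1. a k > 0" and "0 < x" "x \<le> y" "y < 1"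
  shows "Lterm a j k x \<le> Lterm a j k y"
proof -
  have "x / y * Lterm a j k y \<le> Lterm a j k y"
    using assms Lterm_nonneg[of y a j k] by (intro mult_left_le_one_le) auto
  with Lterm_le_scaled[OF assms] show ?thesis by (rule order_trans)
qed

lemma summable_Lterm:
  assumes pos: "\<forall>k\<ge>1. a k > 0"
    and fin: "\<forall>\<^sub>F x in at_left 1.
               summable (\<lambda>k. real (a (Suc k)) ^ j * x ^ a (Suc k) / (1 - x ^ a (Suc k)))"
    and x: "0 < x" "x < 1"
  shows "summable (\<lambda>k. Lterm a j k x)"
proof -
  from fin obtain b where b: "b < 1" "\<And>y. b < y \<Longrightarrow> y < 1 \<Longrightarrow> summable (\<lambda>k. Lterm a j k y)"
    unfolding eventually_at_left_field Lterm_def by blast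
  define y where "y = (max b x + 1) / 2"
  have y: "b < y" "x \<le> y" "y < 1" using b x by (auto simp: y_def)
  show ?thesis
  proof (rule summable_comparison_test')
    show "summable (\<lambda>k. Lterm a j k y)" using b y by auto
    show "norm (Lterm a j k x) \<le> Lterm a j k y" for k
      using Lterm_nonneg[of x a j k] Lterm_mono[OF pos x(1) y(2,3)] x by simp
  qed
qed

lemma Lser_nonneg:
  assumes "summable (\<lambda>k. Lterm a j k x)" "0 \<le> x" "x \<le> 1"
  shows "0 \<le> Lser a j x"
  unfolding Lser_eq_suminf_Lterm using assms by (intro suminf_nonneg Lterm_nonneg)

lemma Lser_le_scaled:
  assumes "\<forall>k\<ge>1. a k > 0" and "summable (\<lambda>k. Lterm a j k x)"
    and sy: "summable (\<lambda>k. Lterm a j k y)" and "0 < x" "x \<le> y" "y < 1"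
  shows "Lser a j x \<le> x / y * Lser a j y"
proof -
  have "Lser a j x \<le> (\<Sum>k. x / y * Lterm a j k y)"
    unfolding Lser_eq_suminf_Lterm using assms by (intro suminf_le Lterm_le_scaled summable_mult) auto
  also have "\<dots> = x / y * Lser a j y"
    unfolding Lser_eq_suminf_Lterm using sy by (rule suminf_mult)
  finally show ?thesis .
qed

lemma Lpart_nonneg: "0 \<le> x \<Longrightarrow> x \<le> 1 \<Longrightarrow> 0 \<le> Lpart a j N x"
  unfolding Lpart_def by (intro sum_nonneg Lterm_nonneg)

lemma Lpart_le_Lser:
  assumes "summable (\<lambda>k. Lterm a j k x)" "0 \<le> x" "x \<le> 1"
  shows "Lpart a j N x \<le> Lser a j x"
  unfolding Lpart_def Lser_eq_suminf_Lterm using assms by (intro sum_le_suminf Lterm_nonneg) auto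

lemma Lpart_tendsto_Lser:
  "summable (\<lambda>k. Lterm a j k x) \<Longrightarrow> (\<lambda>N. Lpart a j N x) \<longlonglongrightarrow> Lser a j x"
  unfolding Lpart_def Lser_eq_suminf_Lterm by (rule summable_LIMSEQ)

lemma summable_power_a:
  assumes pos: "\<forall>k\<ge>1. a k > 0" and summ: "summable (\<lambda>k. Lterm a j k x)"
    and x: "0 < x" "x < 1"
  shows "summable (\<lambda>k. x ^ a (Suc k))"
proof (rule summable_comparison_test')
  show "summable (\<lambda>k. Lterm a j k x)" using summ .
  fix k :: nat
  have a: "a (Suc k) \<ge> 1" using pos by (simp add: Suc_le_eq)
  have lt1: "x ^ a (Suc k) < 1" using x a by (subst power_less_one_iff) auto
  have gt0: "0 < x ^ a (Suc k)" using x by simp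
  have "x ^ a (Suc k) \<le> x ^ a (Suc k) / (1 - x ^ a (Suc k))"
    using gt0 lt1 by (simp add: le_divide_eq)
  also have "\<dots> \<le> real (a (Suc k)) ^ j * (x ^ a (Suc k) / (1 - x ^ a (Suc k)))"
  proof -
    have "0 < x ^ a (Suc k) / (1 - x ^ a (Suc k))" using gt0 lt1 by simp
    thus ?thesis using a by (subst mult_le_cancel_right1) (auto intro!: one_le_power)
  qed
  finally show "norm (x ^ a (Suc k)) \<le> Lterm a j k x" using gt0 by (simp add: Lterm_def)
qed

lemma x_alpha_eq_1:
  assumes pos: "\<forall>k\<ge>1. a k > 0"
    and summ: "\<And>x. 0 < x \<Longrightarrow> x < 1 \<Longrightarrow> summable (\<lambda>k. Lterm a j k x)"
  shows "x_alpha a = 1"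
proof -
  have "{x \<in> {0..1}. \<not> summable (\<lambda>k. x ^ a (Suc k))} = {1::real}"
  proof safe
    have "\<not> (\<lambda>k. (1::real)) \<longlonglongrightarrow> 0" by (simp add: LIMSEQ_const_iff)
    thus "summable (\<lambda>k. (1::real) ^ a (Suc k)) \<Longrightarrow> False"
      using summable_LIMSEQ_zero by fastforce
  next
    fix x :: real assume x: "x \<in> {0..1}" "\<not> summable (\<lambda>k. x ^ a (Suc k))"
    have "(\<lambda>k. (0::real) ^ a (Suc k)) = (\<lambda>k. 0)" using pos by auto
    hence "x \<noteq> 0" using x by auto
    thus "x = 1" using x summable_power_a[OF pos summ, of x] by fastforce
  qed auto
  thus ?thesis unfolding x_alpha_def by simp
qed

lemma FN_nonneg: "0 \<le> x \<Longrightarrow> x \<le> (1::real) \<Longrightarrow> 0 \<le> FN a N x"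
  unfolding FN_def by (intro prod_nonneg) (auto intro: power_le_one)

lemma FN_le_1: "0 \<le> x \<Longrightarrow> x \<le> (1::real) \<Longrightarrow> FN a N x \<le> 1"
  unfolding FN_def by (intro prod_le_1) (auto intro: power_le_one)

lemma FN_antimono:
  assumes "0 \<le> x" "x \<le> (1::real)" "N0 \<le> N"
  shows "FN a N x \<le> FN a N0 x"
proof -
  have "decseq (\<lambda>N. FN a N x)"
  proof (rule decseq_SucI)
    fix N
    have "FN a (Suc N) x = FN a N x * (1 - x ^ a (Suc N))"
      unfolding FN_def by (simp add: prod.cl_ivl_Suc)
    thus "FN a (Suc N) x \<le> FN a N x"
      using assms FN_nonneg[of x a N] by (simp add: mult_left_le)
  qed
  thus ?thesis using assms(3) by (rule decseqD)
qed

lemma FN_le_prod_times_power: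
  assumes "0 \<le> x" "x \<le> (1::real)"
  shows "FN a N x \<le> (\<Prod>k\<in>{1..N}. real (a k)) * (1 - x) ^ N"
proof -
  have "FN a N x \<le> (\<Prod>k\<in>{1..N}. real (a k) * (1 - x))"
    unfolding FN_def using assms
    by (intro prod_mono) (auto intro: power_le_one one_minus_power_le)
  thus ?thesis by (simp add: prod.distrib)
qed

lemma FN_tendsto_Finf:
  assumes pos: "\<forall>k\<ge>1. a k > 0" and summ: "summable (\<lambda>k. Lterm a j k x)"
    and x: "0 < x" "x < 1"
  shows "(\<lambda>N. FN a N x) \<longlonglongrightarrow> Finf a x"
proof -
  have "summable (\<lambda>k. norm ((1 - x ^ a (Suc k)) - 1))"
    using summable_power_a[OF pos summ x] x by (simp add: power_abs)
  hence "convergent_prod (\<lambda>k. 1 - x ^ a (Suc k))"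
    by (intro abs_convergent_prod_imp_convergent_prod summable_imp_abs_convergent_prod)
  hence "(\<lambda>n. \<Prod>k\<le>n. 1 - x ^ a (Suc k)) \<longlonglongrightarrow> Finf a x"
    unfolding Finf_def by (rule convergent_prod_LIMSEQ)
  moreover have "FN a N x = (\<Prod>k<N. 1 - x ^ a (Suc k))" for N
    unfolding FN_def by (simp add: prod.atLeast1_atMost_eq)
  ultimately have "(\<lambda>n. FN a (Suc n) x) \<longlonglongrightarrow> Finf a x"
    by (simp add: lessThan_Suc_atMost)
  thus ?thesis by (rule LIMSEQ_imp_Suc)
qed

lemma Lser_FN_bounded_near_1:
  assumes summ: "\<And>x. 0 < x \<Longrightarrow> x < 1 \<Longrightarrow> summable (\<lambda>k. Lterm a j k x)"
    and bigO: "Lser a j \<in> O[at_left 1](\<lambda>x. (1 - x) powr (- \<rho>))"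
    and N0: "\<rho> \<le> real N0"
  obtains y C where "1/2 < y" "y < 1" "0 \<le> C"
    and "\<And>x. y \<le> x \<Longrightarrow> x < 1 \<Longrightarrow> Lser a j x * FN a N0 x \<le> C"
proof -
  from bigO obtain c where c: "c > 0"
    and "\<forall>\<^sub>F x in at_left 1. norm (Lser a j x) \<le> c * norm ((1 - x) powr (- \<rho>))"
    by (auto elim: landau_o.bigE)
  then obtain b where b: "b < 1"
    and pole: "\<And>x. b < x \<Longrightarrow> x < 1 \<Longrightarrow> Lser a j x \<le> c * (1 - x) powr (- \<rho>)"
    unfolding eventually_at_left_field by fastforce
  define y where "y = (max b (1/2) + 1) / 2"
  have y: "b < y" "1/2 < y" "y < 1" using b by (auto simp: y_def)
  define P where "P = (\<Prod>k\<in>{1..N0}. real (a k))"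
  have P: "0 \<le> P" unfolding P_def by (intro prod_nonneg) auto
  have "Lser a j x * FN a N0 x \<le> c * P" if x: "y \<le> x" "x < 1" for x
  proof -
    have "Lser a j x * FN a N0 x \<le> (c * (1 - x) powr (- \<rho>)) * (P * (1 - x) ^ N0)"
      using x y c pole[of x] summ[of x] unfolding P_def
      by (intro mult_mono FN_le_prod_times_power Lser_nonneg FN_nonneg) auto
    also have "\<dots> = c * P * (1 - x) powr (real N0 - \<rho>)"
      using x by (simp add: powr_diff powr_realpow powr_minus field_simps)
    also have "\<dots> \<le> c * P * 1"
      using x y N0 c P by (intro mult_left_mono powr_le1) auto
    finally show ?thesis by simp
  qed
  with y c P show thesis by (intro that[of y "c * P"]) auto
qed

lemma Lser_FN_le_linear:
  assumes pos: "\<forall>k\<ge>1. a k > 0"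
    and summ: "\<And>x. 0 < x \<Longrightarrow> x < 1 \<Longrightarrow> summable (\<lambda>k. Lterm a j k x)"
    and bigO: "Lser a j \<in> O[at_left 1](\<lambda>x. (1 - x) powr (- \<rho>))"
    and N0: "\<rho> \<le> real N0"
  obtains K where "\<And>x. 0 < x \<Longrightarrow> x < 1 \<Longrightarrow> Lser a j x * FN a N0 x \<le> K * x"
proof -
  obtain y C where y: "1/2 < y" "y < 1" and C: "0 \<le> C"
    and near_one: "\<And>x. y \<le> x \<Longrightarrow> x < 1 \<Longrightarrow> Lser a j x * FN a N0 x \<le> C"
    using Lser_FN_bounded_near_1[OF summ bigO N0] by blast
  have Ly: "0 \<le> Lser a j y / y" using y summ[of y] by (simp add: Lser_nonneg)
  have "Lser a j x * FN a N0 x \<le> (2 * C + Lser a j y / y) * x" if x: "0 < x" "x < 1" for x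
  proof (cases "y \<le> x")
    case True
    have "C \<le> 2 * C * x" using mult_left_mono[of 1 "2 * x" C] C y True by simp
    also have "\<dots> \<le> (2 * C + Lser a j y / y) * x" using Ly x by (intro mult_right_mono) auto
    finally show ?thesis using near_one[OF True x(2)] by linarith
  next
    case False
    have "Lser a j x * FN a N0 x \<le> x / y * Lser a j y * 1"
      using x y False summ[of x] summ[of y]
      by (intro mult_mono Lser_le_scaled[OF pos] Lser_nonneg FN_le_1 FN_nonneg mult_nonneg_nonneg
          divide_nonneg_pos) auto
    also have "\<dots> = Lser a j y / y * x" by simp
    also have "\<dots> \<le> (2 * C + Lser a j y / y) * x" using C x by (intro mult_right_mono) auto
    finally show ?thesis .
  qed
  thus thesis by (rule that)
qed

lemma set_integrable_Lser_FN:
  assumes pos: "\<forall>k\<ge>1. a k > 0"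
    and summ: "\<And>x. 0 < x \<Longrightarrow> x < 1 \<Longrightarrow> summable (\<lambda>k. Lterm a j k x)"
    and bigO: "Lser a j \<in> O[at_left 1](\<lambda>x. (1 - x) powr (- \<rho>))"
    and N0: "\<rho> \<le> real N0"
  shows "set_integrable lborel {0<..<1} (\<lambda>x. Lser a j x * FN a N0 x * \<bar>ln x\<bar> ^ m / x)"
proof -
  obtain K where K: "\<And>x. 0 < x \<Longrightarrow> x < 1 \<Longrightarrow> Lser a j x * FN a N0 x \<le> K * x"
    using Lser_FN_le_linear[OF pos summ bigO N0] by blast
  show ?thesis
  proof (rule set_integrable_bound)
    show "set_integrable lborel {0<..<1} (\<lambda>x. K * \<bar>ln x\<bar> ^ m)"
      by (intro set_integrable_mult_right set_integrable_abs_ln_power)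
    show "set_borel_measurable lborel {0<..<1} (\<lambda>x. Lser a j x * FN a N0 x * \<bar>ln x\<bar> ^ m / x)"
      unfolding set_borel_measurable_def Lser_def FN_def by measurable
    show "AE x in lborel. x \<in> {0<..<1} \<longrightarrow>
        norm (Lser a j x * FN a N0 x * \<bar>ln x\<bar> ^ m / x) \<le> norm (K * \<bar>ln x\<bar> ^ m)"
    proof (intro AE_I2 impI)
      fix x :: real assume "x \<in> {0<..<1}"
      hence x: "0 < x" "x < 1" by auto
      have eq: "Lser a j x * FN a N0 x * \<bar>ln x\<bar> ^ m / x = Lser a j x * FN a N0 x / x * \<bar>ln x\<bar> ^ m"
        by simp
      have nn: "0 \<le> Lser a j x * FN a N0 x / x * \<bar>ln x\<bar> ^ m"
        using x summ[of x] by (simp add: Lser_nonneg FN_nonneg)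
      have "Lser a j x * FN a N0 x / x * \<bar>ln x\<bar> ^ m \<le> K * \<bar>ln x\<bar> ^ m"
        using K[OF x] x by (intro mult_right_mono) (simp_all add: divide_le_eq)
      thus "norm (Lser a j x * FN a N0 x * \<bar>ln x\<bar> ^ m / x) \<le> norm (K * \<bar>ln x\<bar> ^ m)"
        unfolding eq real_norm_def abs_of_nonneg[OF nn] using abs_ge_self order_trans by blast
    qed
  qed
qed

text \<open>\<open>exp (-t) * EU_density a j N k (exp (-t))\<close> is the \<open>k\<close>-th integrand in \<open>EU a j N\<close>.\<close>

definition EU_density :: "(nat \<Rightarrow> nat) \<Rightarrow> nat \<Rightarrow> nat \<Rightarrow> nat \<Rightarrow> real \<Rightarrow> real" where
  "EU_density a j N k x = real (a k) ^ j / fact (j - 1) * (x ^ a k / x) *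
      (\<Prod>i\<in>{1..N} - {k}. 1 - x ^ a i) * \<bar>ln x\<bar> ^ (j - 1)"

lemma EU_density_measurable [measurable]: "EU_density a j N k \<in> borel_measurable borel"
  unfolding EU_density_def by measurable

lemma set_integrable_EU_density:
  assumes pos: "\<forall>k\<ge>1. a k > 0" and k: "k \<in> {1..N}"
  shows "set_integrable lborel {0<..<1} (EU_density a j N k)"
proof (rule set_integrable_bound)
  define C where "C = real (a k) ^ j / fact (j - 1)"
  show "set_integrable lborel {0<..<1} (\<lambda>x. C * \<bar>ln x\<bar> ^ (j - 1))"
    by (intro set_integrable_mult_right set_integrable_abs_ln_power)
  show "set_borel_measurable lborel {0<..<1} (EU_density a j N k)"
    unfolding set_borel_measurable_def by measurable
  show "AE x in lborel. x \<in> {0<..<1} \<longrightarrow> norm (EU_density a j N k x) \<le> norm (C * \<bar>ln x\<bar> ^ (j - 1))"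
  proof (intro AE_I2 impI)
    fix x :: real assume "x \<in> {0<..<1}"
    hence x: "0 < x" "x < 1" by auto
    define q where "q = x ^ a k / x * (\<Prod>i\<in>{1..N} - {k}. 1 - x ^ a i)"
    have "a k \<ge> 1" using pos k by (simp add: Suc_le_eq)
    hence "x ^ a k \<le> x ^ 1" using x by (intro power_decreasing) auto
    hence r1: "x ^ a k / x \<le> 1" using x by simp
    have r0: "0 \<le> x ^ a k / x" using x by simp
    have p1: "(\<Prod>i\<in>{1..N} - {k}. 1 - x ^ a i) \<le> 1" and p0: "0 \<le> (\<Prod>i\<in>{1..N} - {k}. 1 - x ^ a i)"
      using x by (auto intro!: prod_le_1 prod_nonneg power_le_one)
    have q: "0 \<le> q" "q \<le> 1"
      unfolding q_def by (rule mult_nonneg_nonneg[OF r0 p0], rule mult_le_one[OF r1 p0 p1])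
    have "EU_density a j N k x = q * (C * \<bar>ln x\<bar> ^ (j - 1))"
      by (simp add: EU_density_def C_def q_def mult_ac)
    thus "norm (EU_density a j N k x) \<le> norm (C * \<bar>ln x\<bar> ^ (j - 1))"
      using q by (simp add: abs_mult mult_left_le_one_le)
  qed
qed

lemma EU_summand_eq_set_integral:
  assumes pos: "\<forall>k\<ge>1. a k > 0" and k: "k \<in> {1..N}" and j: "j \<ge> 1"
  shows "(LINT t:{0<..}|lborel. real (a k) * exp (- real (a k) * t) * (real (a k) * t) ^ (j - 1)
           / fact (j - 1) * (\<Prod>i\<in>{1..N} - {k}. 1 - exp (- real (a i) * t)))
    = (LINT x:{0<..<1}|lborel. EU_density a j N k x)"
proof -
  have exp_power: "exp (-t) ^ n = exp (- real n * t)" for t n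
    by (simp add: exp_of_nat_mult [symmetric])
  have "real (a k) * exp (- real (a k) * t) * (real (a k) * t) ^ (j - 1) / fact (j - 1)
          * (\<Prod>i\<in>{1..N} - {k}. 1 - exp (- real (a i) * t))
        = exp (-t) * EU_density a j N k (exp (-t))" if "t \<in> {0<..}" for t
  proof -
    obtain i where "j = Suc i" using j by (cases j) auto
    thus ?thesis using that by (simp add: EU_density_def exp_power power_mult_distrib field_simps)
  qed
  hence "(LINT t:{0<..}|lborel. real (a k) * exp (- real (a k) * t) * (real (a k) * t) ^ (j - 1)
           / fact (j - 1) * (\<Prod>i\<in>{1..N} - {k}. 1 - exp (- real (a i) * t)))
       = (LINT t:{0<..}|lborel. exp (-t) * EU_density a j N k (exp (-t)))"
    by (intro set_lebesgue_integral_cong) auto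
  also have "\<dots> = (LINT x:{0<..<1}|lborel. EU_density a j N k x)"
    using set_integrable_EU_density[OF pos k] by (rule set_integral_exp_neg_substitution(2)) simp
  finally show ?thesis .
qed

lemma sum_EU_density:
  assumes pos: "\<forall>k\<ge>1. a k > 0" and x: "0 < x" "x < 1"
  shows "(\<Sum>k\<in>{1..N}. EU_density a j N k x)
       = Lpart a j N x * FN a N x * \<bar>ln x\<bar> ^ (j - 1) / x / fact (j - 1)"
proof -
  have "EU_density a j N k x = real (a k) ^ j * x ^ a k / (1 - x ^ a k) *
          (FN a N x * \<bar>ln x\<bar> ^ (j - 1) / x / fact (j - 1))" if k: "k \<in> {1..N}" for k
  proof -
    have "a k \<ge> 1" using pos k by (simp add: Suc_le_eq)
    hence lt1: "x ^ a k < 1" using x by (subst power_less_one_iff) auto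
    have "FN a N x = (1 - x ^ a k) * (\<Prod>i\<in>{1..N} - {k}. 1 - x ^ a i)"
      unfolding FN_def using k by (subst prod.remove) auto
    hence rest: "(\<Prod>i\<in>{1..N} - {k}. 1 - x ^ a i) = FN a N x / (1 - x ^ a k)"
      using lt1 by (simp add: field_simps)
    show ?thesis using lt1 x unfolding EU_density_def rest by (simp add: field_simps)
  qed
  hence "(\<Sum>k\<in>{1..N}. EU_density a j N k x) = (\<Sum>k\<in>{1..N}. real (a k) ^ j * x ^ a k / (1 - x ^ a k) *
          (FN a N x * \<bar>ln x\<bar> ^ (j - 1) / x / fact (j - 1)))"
    by (rule sum.cong [OF refl])
  also have "\<dots> = (\<Sum>k\<in>{1..N}. real (a k) ^ j * x ^ a k / (1 - x ^ a k)) *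
          (FN a N x * \<bar>ln x\<bar> ^ (j - 1) / x / fact (j - 1))"
    by (rule sum_distrib_right [symmetric])
  also have "(\<Sum>k\<in>{1..N}. real (a k) ^ j * x ^ a k / (1 - x ^ a k)) = Lpart a j N x"
    by (simp add: Lpart_def Lterm_def sum.atLeast1_atMost_eq)
  finally show ?thesis by simp
qed

lemma EU_eq_set_integral:
  assumes pos: "\<forall>k\<ge>1. a k > 0" and j: "j \<ge> 1"
  shows "EU a j N = (LINT x:{0<..<1}|lborel. Lpart a j N x * FN a N x * \<bar>ln x\<bar> ^ (j - 1) / x) / fact (j - 1)"
proof -
  have "EU a j N = (\<Sum>k\<in>{1..N}. LINT x:{0<..<1}|lborel. EU_density a j N k x)"
    unfolding EU_def by (intro sum.cong refl EU_summand_eq_set_integral[OF pos _ j])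
  also have "\<dots> = (LINT x|lborel. (\<Sum>k\<in>{1..N}. indicator {0<..<1} x *\<^sub>R EU_density a j N k x))"
    unfolding set_lebesgue_integral_def
    by (rule Bochner_Integration.integral_sum [symmetric])
      (use set_integrable_EU_density[OF pos] in \<open>auto simp: set_integrable_def\<close>)
  also have "\<dots> = (LINT x:{0<..<1}|lborel. (\<Sum>k\<in>{1..N}. EU_density a j N k x))"
    by (simp only: set_lebesgue_integral_def scaleR_sum_right)
  also have "\<dots> = (LINT x:{0<..<1}|lborel. Lpart a j N x * FN a N x * \<bar>ln x\<bar> ^ (j - 1) / x / fact (j - 1))"
    using sum_EU_density[OF pos] by (intro set_lebesgue_integral_cong) auto
  also have "\<dots> = (LINT x:{0<..<1}|lborel. Lpart a j N x * FN a N x * \<bar>ln x\<bar> ^ (j - 1) / x) / fact (j - 1)"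
    by (rule set_integral_divide_zero)
  finally show ?thesis .
qed

lemma Lpart_FN_weighted_tendsto:
  assumes pos: "\<forall>k\<ge>1. a k > 0"
    and summ: "\<And>x. 0 < x \<Longrightarrow> x < 1 \<Longrightarrow> summable (\<lambda>k. Lterm a j k x)"
  shows "(\<lambda>N. indicator {0<..<1} x * (Lpart a j N x * FN a N x * \<bar>ln x\<bar> ^ m / x))
           \<longlonglongrightarrow> indicator {0<..<1} x * (Lser a j x * Finf a x * \<bar>ln x\<bar> ^ m / x)"
proof (cases "x \<in> {0<..<1}")
  case True
  hence x: "0 < x" "x < 1" by auto
  show ?thesis
    using Lpart_tendsto_Lser[OF summ[OF x]] FN_tendsto_Finf[OF pos summ[OF x] x]
    by (intro tendsto_intros) (use x in auto)
qed simp

lemma Lpart_FN_weighted_le: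
  assumes summ: "\<And>x. 0 < x \<Longrightarrow> x < 1 \<Longrightarrow> summable (\<lambda>k. Lterm a j k x)" and "N0 \<le> N"
  shows "norm (indicator {0<..<1} x * (Lpart a j N x * FN a N x * \<bar>ln x\<bar> ^ m / x))
           \<le> indicator {0<..<1} x * (Lser a j x * FN a N0 x * \<bar>ln x\<bar> ^ m / x)"
proof (cases "x \<in> {0<..<1}")
  case True
  hence x: "0 < x" "x < 1" by auto
  have "0 \<le> Lpart a j N x * FN a N x * \<bar>ln x\<bar> ^ m / x" using x by (simp add: Lpart_nonneg FN_nonneg)
  moreover have "Lpart a j N x * FN a N x \<le> Lser a j x * FN a N0 x"
    using x summ[OF x] assms(2) by (intro mult_mono Lpart_le_Lser FN_antimono Lser_nonneg FN_nonneg) auto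
  hence "Lpart a j N x * FN a N x * \<bar>ln x\<bar> ^ m / x \<le> Lser a j x * FN a N0 x * \<bar>ln x\<bar> ^ m / x"
    using x by (intro divide_right_mono mult_right_mono) auto
  ultimately show ?thesis using True by simp
qed simp

lemma EU_tendsto_set_integral:
  assumes pos: "\<forall>k\<ge>1. a k > 0"
    and summ: "\<And>x. 0 < x \<Longrightarrow> x < 1 \<Longrightarrow> summable (\<lambda>k. Lterm a j k x)"
    and j: "j \<ge> 1"
    and dom: "set_integrable lborel {0<..<1} (\<lambda>x. Lser a j x * FN a N0 x * \<bar>ln x\<bar> ^ (j - 1) / x)"
  shows "set_integrable lborel {0<..<1} (\<lambda>x. Lser a j x * Finf a x * \<bar>ln x\<bar> ^ (j - 1) / x)"
    and "(\<lambda>N. EU a j N) \<longlonglongrightarrow>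
           (LINT x:{0<..<1}|lborel. Lser a j x * Finf a x * \<bar>ln x\<bar> ^ (j - 1) / x) / fact (j - 1)"
proof -
  define G where "G N x = indicator {0<..<1} x * (Lpart a j N x * FN a N x * \<bar>ln x\<bar> ^ (j - 1) / x)"
    for N :: nat and x :: real
  define g where "g x = indicator {0<..<1} x * (Lser a j x * Finf a x * \<bar>ln x\<bar> ^ (j - 1) / x)"
    for x :: real
  define w where "w x = indicator {0<..<1} x * (Lser a j x * FN a N0 x * \<bar>ln x\<bar> ^ (j - 1) / x)"
    for x :: real
  have G_meas: "G N \<in> borel_measurable lborel" for N
    unfolding G_def Lpart_def Lterm_def FN_def by measurable
  have lim: "(\<lambda>i. G (i + N0) x) \<longlonglongrightarrow> g x" for x
    unfolding G_def g_def
    by (rule LIMSEQ_ignore_initial_segment[OF Lpart_FN_weighted_tendsto[OF pos summ]])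
  have bound: "norm (G (i + N0) x) \<le> w x" for i x
    unfolding G_def w_def by (rule Lpart_FN_weighted_le[OF summ le_add2])
  have g_meas: "g \<in> borel_measurable lborel"
    by (rule borel_measurable_LIMSEQ_real[where u="\<lambda>i. G (i + N0)"]) (use G_meas lim in auto)
  have w_int: "integrable lborel w"
    using dom unfolding set_integrable_def w_def by simp
  have "integrable lborel g"
    by (rule integrable_dominated_convergence[where s="\<lambda>i. G (i + N0)" and w=w])
       (use g_meas G_meas w_int lim bound in auto)
  thus "set_integrable lborel {0<..<1} (\<lambda>x. Lser a j x * Finf a x * \<bar>ln x\<bar> ^ (j - 1) / x)"
    unfolding set_integrable_def g_def by simp
  have "(\<lambda>i. integral\<^sup>L lborel (G (i + N0))) \<longlonglongrightarrow> integral\<^sup>L lborel g"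
    by (rule integral_dominated_convergence[where s="\<lambda>i. G (i + N0)" and w=w])
       (use g_meas G_meas w_int lim bound in auto)
  moreover have "EU a j N = integral\<^sup>L lborel (G N) / fact (j - 1)" for N
    unfolding EU_eq_set_integral[OF pos j] set_lebesgue_integral_def G_def by simp
  ultimately have "(\<lambda>i. EU a j (i + N0)) \<longlonglongrightarrow> integral\<^sup>L lborel g / fact (j - 1)"
    by (simp add: tendsto_divide)
  thus "(\<lambda>N. EU a j N) \<longlonglongrightarrow>
           (LINT x:{0<..<1}|lborel. Lser a j x * Finf a x * \<bar>ln x\<bar> ^ (j - 1) / x) / fact (j - 1)"
    unfolding set_lebesgue_integral_def g_def by (simp add: LIMSEQ_offset)
qed

theorem corollary1:
  fixes a :: "nat \<Rightarrow> nat" and j :: nat and \<rho> :: real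
  assumes pos: "\<forall>k\<ge>1. a k > 0"
    and tends: "filterlim a at_top sequentially"
    and j: "j \<ge> 2"
    and rho: "\<rho> > 0"
    and fin: "\<forall>\<^sub>F x in at_left 1.
               summable (\<lambda>k. real (a (Suc k)) ^ j * x ^ a (Suc k) / (1 - x ^ a (Suc k)))"
    and bigO: "Lser a j \<in> O[at_left 1](\<lambda>x. (1 - x) powr (- \<rho>))"
  shows "(\<exists>N0. set_integrable lborel {0<..<1::real}
            (\<lambda>x. Lser a j x * FN a N0 x * \<bar>ln x\<bar> ^ (j - 1) / x))
       \<and> set_integrable lborel {0<..<x_alpha a}
            (\<lambda>x. Lser a j x * Finf a x * \<bar>ln x\<bar> ^ (j - 1) / x)
       \<and> (\<lambda>N. EU a j N) \<longlonglongrightarrow> I_alpha a j"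
proof -
  have summ: "\<And>x. 0 < x \<Longrightarrow> x < 1 \<Longrightarrow> summable (\<lambda>k. Lterm a j k x)"
    by (rule summable_Lterm[OF pos fin])
  have "\<rho> \<le> real (nat \<lceil>\<rho>\<rceil>)" by linarith
  note dom = set_integrable_Lser_FN[OF pos summ bigO this, of "j - 1"]
  have "j \<ge> 1" using j by simp
  note limit = EU_tendsto_set_integral[OF pos summ this dom]
  have x_alpha: "x_alpha a = 1" by (rule x_alpha_eq_1[OF pos summ])
  show ?thesis
  proof (intro conjI exI)
    show "set_integrable lborel {0<..<x_alpha a} (\<lambda>x. Lser a j x * Finf a x * \<bar>ln x\<bar> ^ (j - 1) / x)"
      unfolding x_alpha by (rule limit(1))
    show "(\<lambda>N. EU a j N) \<longlonglongrightarrow> I_alpha a j"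
      using limit(2) unfolding I_alpha_def x_alpha by simp
  qed (rule dom)
qed

end
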